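(* For every integer $n\ge 10$ and every integer $m$ with $3n-11\le m\le \left\lfloor \frac{n-1}{2} \right\rfloor \left\lceil \frac{n-1}{2} \right\rceil +2$, there exists a non-bipartite $K_4^-$-saturated graph with $n$ vertices and $m$ edges.
   Context: All graphs are finite and simple. $K_4^-$ denotes the graph obtained from the complete graph $K_4$ by deleting one edge. For a graph $H$, a graph $G$ is $H$-saturated if $G$ contains no copy of $H$ as a subgraph, but for every pair of nonadjacent vertices $u,v$ of $G$, the graph $G+uv$ contains at least one copy of $H$. This is part (b) of the theorem. *)

theory Defs
  imports Main
begin

definition simple_graph :: "'a set \<Rightarrow> 'a set set \<Rightarrow> bool" where
  "simple_graph V E \<longleftrightarrow> finite V \<and>
     (\<forall>e\<in>E. \<exists>u v. u \<in> V \<and> v \<in> V \<and> u \<noteq> v \<and> e = {u, v})"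

definition contains_K4_minus :: "'a set \<Rightarrow> 'a set set \<Rightarrow> bool" where
  "contains_K4_minus V E \<longleftrightarrow>
     (\<exists>a b c d. a \<in> V \<and> b \<in> V \<and> c \<in> V \<and> d \<in> V \<and> distinct [a, b, c, d] \<and>
        {a, b} \<in> E \<and> {a, c} \<in> E \<and> {a, d} \<in> E \<and> {b, c} \<in> E \<and> {b, d} \<in> E)"

definition K4_minus_saturated :: "'a set \<Rightarrow> 'a set set \<Rightarrow> bool" where
  "K4_minus_saturated V E \<longleftrightarrow> \<not> contains_K4_minus V E \<and>
     (\<forall>u\<in>V. \<forall>v\<in>V. u \<noteq> v \<and> {u, v} \<notin> E \<longrightarrow> contains_K4_minus V (insert {u, v} E))"

definition bipartite :: "'a set \<Rightarrow> 'a set set \<Rightarrow> bool" where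
  "bipartite V E \<longleftrightarrow> (\<exists>A B. A \<inter> B = {} \<and> A \<union> B = V \<and>
     (\<forall>e\<in>E. card (e \<inter> A) = 1 \<and> card (e \<inter> B) = 1))"

end

theory Submission
  imports Defs
begin

(* The graph is a blow-up of an 8-vertex pattern: vertex 0 is joined to 1, 2 and to p+1..p+a; the
   block 3..p is joined to every vertex from p+1 on; vertex 1 is joined to p+1 and to the block
   p+a+1..n-1, and vertex 2 to p+2 and to that same block. Its only triangles, 0,1,p+1 and 0,2,p+2,
   share no edge, so there is no K4^-, and they make the graph non-bipartite. That adding any
   non-edge creates a K4^- is a finite check on the pattern. The graph has p(n-1-p)+4-a edges, and
   for 4 <= p <= (n-1)/2 and 2 <= a <= n-1-p these counts fill the interval of the theorem. *)

lemma simple_graph_edgeD: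
  assumes "simple_graph V E" "{x, y} \<in> E"
  shows "x \<in> V" "y \<in> V" "x \<noteq> y"
  using assms unfolding simple_graph_def by (fastforce simp: doubleton_eq_iff)+

lemma contains_K4_minus_insert_common_neighbours:
  assumes "simple_graph V E" "u \<noteq> v" "c \<noteq> d"
    and "{u, c} \<in> E" "{u, d} \<in> E" "{v, c} \<in> E" "{v, d} \<in> E"
  shows "contains_K4_minus V (insert {u, v} E)"
  unfolding contains_K4_minus_def using assms simple_graph_edgeD[OF assms(1)]
  by (intro exI[of _ u] exI[of _ v] exI[of _ c] exI[of _ d]) auto

lemma contains_K4_minus_insert_triangle_neighbour:
  assumes "simple_graph V E" "u \<noteq> v" "v \<noteq> t"
    and "{u, w} \<in> E" "{u, t} \<in> E" "{w, t} \<in> E" "{w, v} \<in> E"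
  shows "contains_K4_minus V (insert {u, v} E)"
  unfolding contains_K4_minus_def using assms simple_graph_edgeD[OF assms(1)]
  by (intro exI[of _ u] exI[of _ w] exI[of _ v] exI[of _ t]) (auto simp: insert_commute)

lemma triangle_not_bipartite:
  assumes "simple_graph V E" "{x, y} \<in> E" "{y, z} \<in> E" "{x, z} \<in> E"
  shows "\<not> bipartite V E"
proof
  assume "bipartite V E"
  then obtain A where A: "\<forall>e\<in>E. card (e \<inter> A) = 1" unfolding bipartite_def by blast
  have separates: "x \<in> A \<longleftrightarrow> y \<notin> A" if "{x, y} \<in> E" for x y
    using A[rule_format, OF that] simple_graph_edgeD[OF assms(1) that]
    by (cases "x \<in> A"; cases "y \<in> A") auto
  show False using separates[OF assms(2)] separates[OF assms(3)] separates[OF assms(4)] by blast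
qed

definition blowup :: "('c \<Rightarrow> 'c \<Rightarrow> bool) \<Rightarrow> ('a \<Rightarrow> 'c) \<Rightarrow> 'a set \<Rightarrow> 'a set set" where
  "blowup H f V = {{x, y} | x y. x \<in> V \<and> y \<in> V \<and> H (f x) (f y)}"

lemma mem_blowup:
  assumes "symp H"
  shows "{x, y} \<in> blowup H f V \<longleftrightarrow> x \<in> V \<and> y \<in> V \<and> H (f x) (f y)"
  using assms unfolding blowup_def by (auto simp: doubleton_eq_iff dest: sympD)

lemma simple_graph_blowup:
  assumes "finite V" "irreflp H"
  shows "simple_graph V (blowup H f V)"
  using assms unfolding simple_graph_def blowup_def by (blast dest: irreflpD)

lemma eq_if_card_class_le_1:
  assumes "finite V" "card {x\<in>V. f x = k} \<le> 1" "x \<in> V" "y \<in> V" "f x = k" "f y = k"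
  shows "x = y"
  using assms card_le_Suc0_iff_eq[of "{x\<in>V. f x = k}"] by auto

lemma blowup_K4_minus_free:
  assumes "finite V" "symp H"
    and triangles: "\<And>i j k l. H i j \<Longrightarrow> H i k \<Longrightarrow> H j k \<Longrightarrow> H i l \<Longrightarrow> H j l \<Longrightarrow>
                      k = l \<and> k \<in> S"
    and singletons: "\<forall>k\<in>S. card {x\<in>V. f x = k} \<le> 1"
  shows "\<not> contains_K4_minus V (blowup H f V)"
proof
  assume "contains_K4_minus V (blowup H f V)"
  then obtain x y c d where "x \<in> V" "y \<in> V" "c \<in> V" "d \<in> V" "c \<noteq> d"
    "H (f x) (f y)" "H (f x) (f c)" "H (f x) (f d)" "H (f y) (f c)" "H (f y) (f d)"
    unfolding contains_K4_minus_def mem_blowup[OF assms(2)] by auto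
  then show False
    using triangles singletons eq_if_card_class_le_1[OF assms(1)] by metis
qed

(* A new edge between classes i and j closes a K4^- either through two common neighbours (classes
   k and l, equal only if that class has two vertices) or through a triangle i w t with j adjacent
   to w. The classes in R are known to be nonempty, those in R2 to have at least two vertices. *)
definition K4_minus_forced :: "('c \<Rightarrow> 'c \<Rightarrow> bool) \<Rightarrow> 'c set \<Rightarrow> 'c set \<Rightarrow> 'c \<Rightarrow> 'c \<Rightarrow> bool" where
  "K4_minus_forced H R R2 i j \<longleftrightarrow>
     (\<exists>k\<in>R. \<exists>l\<in>R. (k \<noteq> l \<or> k \<in> R2) \<and> H i k \<and> H i l \<and> H j k \<and> H j l) \<or>
     (\<exists>w\<in>R. \<exists>t\<in>R. t \<noteq> j \<and> H i w \<and> H i t \<and> H w t \<and> H w j)"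

lemma contains_K4_minus_insert_blowup:
  assumes "finite V" "symp H" "irreflp H"
    and occupied: "\<forall>k\<in>R. 1 \<le> card {x\<in>V. f x = k}"
    and doubly_occupied: "\<forall>k\<in>R2. 2 \<le> card {x\<in>V. f x = k}"
    and "u \<in> V" "v \<in> V" "u \<noteq> v" "K4_minus_forced H R R2 (f u) (f v)"
  shows "contains_K4_minus V (insert {u, v} (blowup H f V))"
proof -
  have simple: "simple_graph V (blowup H f V)" using simple_graph_blowup[OF assms(1,3)] .
  note edge = mem_blowup[OF assms(2)]
  have member: "\<exists>x\<in>V. f x = k" if "k \<in> R" for k
  proof -
    have "0 < card {x\<in>V. f x = k}" using occupied that by auto
    then show ?thesis by (auto simp: card_gt_0_iff)
  qed
  from assms(9) consider
      (common_neighbours) k l where "k \<in> R" "l \<in> R" "k \<noteq> l \<or> k \<in> R2"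
        "H (f u) k" "H (f u) l" "H (f v) k" "H (f v) l"
    | (triangle) w t where "w \<in> R" "t \<in> R" "t \<noteq> f v"
        "H (f u) w" "H (f u) t" "H w t" "H w (f v)"
    unfolding K4_minus_forced_def by blast
  then show ?thesis
  proof cases
    case common_neighbours
    obtain c d where "c \<in> V" "d \<in> V" "c \<noteq> d" "f c = k" "f d = l"
    proof (cases "k = l")
      case True
      then have "\<not> card {x\<in>V. f x = k} \<le> 1"
        using common_neighbours(3) doubly_occupied by fastforce
      then show ?thesis
        using that True assms(1) card_le_Suc0_iff_eq[of "{x\<in>V. f x = k}"] by auto
    next
      case False
      then show ?thesis using member common_neighbours(1,2) that by metis
    qed
    with common_neighbours show ?thesis
      using contains_K4_minus_insert_common_neighbours[OF simple \<open>u \<noteq> v\<close>] assms(6,7) edge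
      by metis
  next
    case triangle
    then obtain x y where "x \<in> V" "y \<in> V" "f x = w" "f y = t"
      using member by metis
    with triangle show ?thesis
      using contains_K4_minus_insert_triangle_neighbour[OF simple \<open>u \<noteq> v\<close>] assms(6,7) edge
      by metis
  qed
qed

lemma K4_minus_saturated_blowup:
  assumes "finite V" "symp H" "irreflp H"
    and triangles: "\<And>i j k l. H i j \<Longrightarrow> H i k \<Longrightarrow> H j k \<Longrightarrow> H i l \<Longrightarrow> H j l \<Longrightarrow>
                      k = l \<and> k \<in> S"
    and singletons: "\<forall>k\<in>S. card {x\<in>V. f x = k} \<le> 1"
    and occupied: "\<forall>k\<in>R. 1 \<le> card {x\<in>V. f x = k}"
    and doubly_occupied: "\<forall>k\<in>R2. 2 \<le> card {x\<in>V. f x = k}"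
    and forced: "\<And>i j. i \<in> f ` V \<Longrightarrow> j \<in> f ` V \<Longrightarrow> \<not> H i j \<Longrightarrow> (i = j \<Longrightarrow> i \<notin> S) \<Longrightarrow>
                   K4_minus_forced H R R2 i j \<or> K4_minus_forced H R R2 j i"
  shows "K4_minus_saturated V (blowup H f V)"
  unfolding K4_minus_saturated_def
proof (intro conjI ballI impI)
  show "\<not> contains_K4_minus V (blowup H f V)"
    using blowup_K4_minus_free[OF assms(1,2) triangles singletons] .
  note insert_forced = contains_K4_minus_insert_blowup[OF assms(1-3) occupied doubly_occupied]
  fix u v assume "u \<in> V" "v \<in> V" and uv: "u \<noteq> v \<and> {u, v} \<notin> blowup H f V"
  then have "\<not> H (f u) (f v)"
    by (simp add: mem_blowup[OF assms(2)])
  moreover have "f u \<notin> S" if "f u = f v"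
    using singletons eq_if_card_class_le_1[OF assms(1) _ \<open>u \<in> V\<close> \<open>v \<in> V\<close>] that uv by metis
  ultimately consider "K4_minus_forced H R R2 (f u) (f v)" | "K4_minus_forced H R R2 (f v) (f u)"
    using forced \<open>u \<in> V\<close> \<open>v \<in> V\<close> by blast
  then show "contains_K4_minus V (insert {u, v} (blowup H f V))"
  proof cases
    case 1
    then show ?thesis using insert_forced \<open>u \<in> V\<close> \<open>v \<in> V\<close> uv by blast
  next
    case 2
    then have "contains_K4_minus V (insert {v, u} (blowup H f V))"
      using insert_forced \<open>u \<in> V\<close> \<open>v \<in> V\<close> uv by blast
    then show ?thesis by (simp add: insert_commute)
  qed
qed

definition biclique_edges :: "'a set \<Rightarrow> 'a set \<Rightarrow> 'a set set" where
  "biclique_edges A B = {{x, y} | x y. x \<in> A \<and> y \<in> B}"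

lemma card_biclique_edges:
  assumes "finite A" "finite B" "A \<inter> B = {}"
  shows "card (biclique_edges A B) = card A * card B"
proof -
  have "biclique_edges A B = (\<lambda>(x, y). {x, y}) ` (A \<times> B)"
    unfolding biclique_edges_def by auto
  moreover have "inj_on (\<lambda>(x, y). {x, y}) (A \<times> B)"
    using assms(3) by (auto intro!: inj_onI simp: doubleton_eq_iff)
  ultimately show ?thesis
    by (simp add: card_image card_cartesian_product)
qed

lemma card_blowup:
  assumes "finite V" "finite P"
    and H: "\<And>i j. H i j \<longleftrightarrow> (i, j) \<in> P \<or> (j, i) \<in> P"
    and oriented: "\<And>i j. (i, j) \<in> P \<Longrightarrow> (j, i) \<notin> P"
  shows "card (blowup H f V) = (\<Sum>(i, j)\<in>P. card {x\<in>V. f x = i} * card {x\<in>V. f x = j})"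
proof -
  define piece where "piece = (\<lambda>(i, j). biclique_edges {x\<in>V. f x = i} {x\<in>V. f x = j})"
  have "blowup H f V = (\<Union>ij\<in>P. piece ij)"
  proof (intro equalityI subsetI)
    fix e assume "e \<in> blowup H f V"
    then obtain x y where "e = {x, y}" "x \<in> V" "y \<in> V" "(f x, f y) \<in> P \<or> (f y, f x) \<in> P"
      unfolding blowup_def H by blast
    moreover have "{x, y} \<in> piece (f x, f y)" if "x \<in> V" "y \<in> V" for x y
      using that unfolding piece_def biclique_edges_def by blast
    ultimately show "e \<in> (\<Union>ij\<in>P. piece ij)"
      by (metis UN_I insert_commute)
  next
    fix e assume "e \<in> (\<Union>ij\<in>P. piece ij)"
    then obtain x y where "e = {x, y}" "x \<in> V" "y \<in> V" "(f x, f y) \<in> P"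
      unfolding piece_def biclique_edges_def by auto
    then show "e \<in> blowup H f V"
      unfolding blowup_def H by blast
  qed
  moreover have "piece ij \<inter> piece ij' = {}" if "ij \<in> P" "ij' \<in> P" "ij \<noteq> ij'" for ij ij'
    using that oriented unfolding piece_def biclique_edges_def
    by (cases ij; cases ij') (auto simp: doubleton_eq_iff)
  moreover have "finite (piece ij)" for ij
  proof (rule finite_subset)
    show "piece ij \<subseteq> Pow V" unfolding piece_def biclique_edges_def by (auto simp: case_prod_unfold)
  qed (use assms(1) in simp)
  ultimately have "card (blowup H f V) = (\<Sum>ij\<in>P. card (piece ij))"
    using assms(2) by (simp add: card_UN_disjoint)
  also have "\<dots> = (\<Sum>(i, j)\<in>P. card {x\<in>V. f x = i} * card {x\<in>V. f x = j})"
    using assms(1) oriented unfolding piece_def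
    by (intro sum.cong) (auto intro!: card_biclique_edges)
  finally show ?thesis .
qed

definition pattern_edges :: "(nat \<times> nat) set" where
  "pattern_edges = {(0, 1), (0, 2), (0, 4), (0, 5), (0, 6), (1, 4), (1, 7), (2, 5), (2, 7),
     (3, 4), (3, 5), (3, 6), (3, 7)}"

definition pattern :: "nat \<Rightarrow> nat \<Rightarrow> bool" where
  "pattern i j \<longleftrightarrow> (i, j) \<in> pattern_edges \<or> (j, i) \<in> pattern_edges"

lemma symp_pattern: "symp pattern"
  by (rule sympI) (auto simp: pattern_def)

lemma irreflp_pattern: "irreflp pattern"
  by (rule irreflpI) (auto simp: pattern_def pattern_edges_def)

lemma pattern_edges_oriented: "(i, j) \<in> pattern_edges \<Longrightarrow> (j, i) \<notin> pattern_edges"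
  unfolding pattern_edges_def by (elim insertE emptyE) simp_all

lemma pattern_triangles:
  assumes "pattern i j" "pattern i k" "pattern j k" "pattern i l" "pattern j l"
  shows "k = l \<and> k \<in> {0, 1, 2, 4, 5}"
proof -
  have "pattern i k \<longrightarrow> pattern j k \<longrightarrow> pattern i l \<longrightarrow> pattern j l \<longrightarrow>
      k = l \<and> k \<in> {0, 1, 2, 4, 5}"
    using assms(1) unfolding pattern_def[of i j] pattern_edges_def insert_iff empty_iff prod.inject
    by (elim disjE conjE) (simp_all add: pattern_def pattern_edges_def)
  then show ?thesis using assms(2-5) by blast
qed

lemma pattern_non_edge_forced:
  assumes "i < 8" "j < 8" "\<not> pattern i j" "i = j \<Longrightarrow> i \<notin> {0, 1, 2, 4, 5}"
  shows "K4_minus_forced pattern {0, 1, 2, 3, 4, 5} {3} i j \<or>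
    K4_minus_forced pattern {0, 1, 2, 3, 4, 5} {3} j i"
proof -
  have "i \<in> {0, 1, 2, 3, 4, 5, 6, 7}" "j \<in> {0, 1, 2, 3, 4, 5, 6, 7}" using assms(1,2) by auto
  then show ?thesis using assms(3,4) unfolding insert_iff empty_iff
    by (elim disjE) (simp_all add: K4_minus_forced_def pattern_def pattern_edges_def)
qed

definition block :: "nat \<Rightarrow> nat \<Rightarrow> nat \<Rightarrow> nat" where
  "block p a v = (if v \<le> 2 then v else if v \<le> p then 3 else if v \<le> p + 2 then v - p + 3
     else if v \<le> p + a then 6 else 7)"

lemma block_less_8: "block p a v < 8"
  unfolding block_def by auto

lemma block_classes:
  assumes "2 \<le> p" "2 \<le> a" "p + a < n"
  shows "{v\<in>{0..<n}. block p a v = 0} = {0}" "{v\<in>{0..<n}. block p a v = 1} = {1}"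
    "{v\<in>{0..<n}. block p a v = 2} = {2}" "{v\<in>{0..<n}. block p a v = 3} = {3..p}"
    "{v\<in>{0..<n}. block p a v = 4} = {p + 1}" "{v\<in>{0..<n}. block p a v = 5} = {p + 2}"
    "{v\<in>{0..<n}. block p a v = 6} = {p + 3..p + a}"
    "{v\<in>{0..<n}. block p a v = 7} = {p + a + 1..<n}"
  using assms by (auto simp: block_def split: if_splits)

definition block_graph :: "nat \<Rightarrow> nat \<Rightarrow> nat \<Rightarrow> nat set set" where
  "block_graph n p a = blowup pattern (block p a) {0..<n}"

lemma simple_graph_block_graph: "simple_graph {0..<n} (block_graph n p a)"
  unfolding block_graph_def using simple_graph_blowup irreflp_pattern by blast

lemma K4_minus_saturated_block_graph:
  assumes "4 \<le> p" "2 \<le> a" "p + a < n"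
  shows "K4_minus_saturated {0..<n} (block_graph n p a)"
  unfolding block_graph_def
proof (rule K4_minus_saturated_blowup[OF _ symp_pattern irreflp_pattern pattern_triangles])
  have "2 \<le> p" using assms(1) by simp
  note classes = block_classes[OF this assms(2,3)]
  show "\<forall>k\<in>{0, 1, 2, 4, 5}. card {v\<in>{0..<n}. block p a v = k} \<le> 1"
    unfolding ball_simps classes by simp
  show "\<forall>k\<in>{0, 1, 2, 3, 4, 5}. 1 \<le> card {v\<in>{0..<n}. block p a v = k}"
    using assms(1) unfolding ball_simps classes by simp
  show "\<forall>k\<in>{3}. 2 \<le> card {v\<in>{0..<n}. block p a v = k}"
    using assms(1) unfolding ball_simps classes by simp
  show "K4_minus_forced pattern {0, 1, 2, 3, 4, 5} {3} i j \<or>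
      K4_minus_forced pattern {0, 1, 2, 3, 4, 5} {3} j i"
    if "i \<in> block p a ` {0..<n}" "j \<in> block p a ` {0..<n}" "\<not> pattern i j"
      "i = j \<Longrightarrow> i \<notin> {0, 1, 2, 4, 5}" for i j
  proof (rule pattern_non_edge_forced[OF _ _ that(3,4)])
    show "i < 8" "j < 8" using that(1,2) block_less_8 by auto
  qed
qed simp

lemma not_bipartite_block_graph:
  assumes "4 \<le> p" "p + 1 < n"
  shows "\<not> bipartite {0..<n} (block_graph n p a)"
proof (rule triangle_not_bipartite[OF simple_graph_block_graph])
  have "block p a 0 = 0" "block p a 1 = 1" "block p a (p + 1) = 4"
    using assms(1) by (simp_all add: block_def)
  then show "{0, 1} \<in> block_graph n p a" "{1, p + 1} \<in> block_graph n p a"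
    "{0, p + 1} \<in> block_graph n p a"
    using assms unfolding block_graph_def mem_blowup[OF symp_pattern]
    by (simp_all add: pattern_def pattern_edges_def)
qed

lemma card_block_graph:
  assumes "4 \<le> p" "2 \<le> a" "p + a < n"
  shows "card (block_graph n p a) = p * (n - 1 - p) + 4 - a"
proof -
  obtain p' a' r where p: "p = p' + 2" and a: "a = a' + 2" and n: "n = p + a + 1 + r"
  proof
    show "p = (p - 2) + 2" "a = (a - 2) + 2" "n = p + a + 1 + (n - (p + a + 1))"
      using assms by simp_all
  qed
  have "2 \<le> p" using assms(1) by simp
  note classes = block_classes[OF this assms(2,3)]
  define class_size where "class_size k = card {v\<in>{0..<n}. block p a v = k}" for k
  have sizes: "class_size 0 = 1" "class_size (Suc 0) = 1" "class_size 2 = 1" "class_size 3 = p'"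
    "class_size 4 = 1" "class_size 5 = 1" "class_size 6 = a'" "class_size 7 = r"
    unfolding class_size_def classes[unfolded One_nat_def] by (simp_all add: p a n)
  have "card (block_graph n p a) = (\<Sum>(i, j)\<in>pattern_edges. class_size i * class_size j)"
    unfolding block_graph_def class_size_def
    by (rule card_blowup)
      (simp_all add: pattern_def pattern_edges_oriented, simp add: pattern_edges_def)
  also have "\<dots> = 6 + a' + 2 * r + p' * (2 + a' + r)"
    unfolding pattern_edges_def by (simp add: sizes algebra_simps)
  also have "\<dots> = p * (n - 1 - p) + 4 - a"
    by (simp add: p a n algebra_simps)
  finally show ?thesis .
qed

lemma edge_count_parameters:
  fixes n m :: nat
  assumes "10 \<le> n" "3 * n - 11 \<le> m" "m \<le> (n - 1) div 2 * ((n - 1) - (n - 1) div 2) + 2"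
  shows "\<exists>p a. 4 \<le> p \<and> 2 \<le> a \<and> p + a < n \<and> m = p * (n - 1 - p) + 4 - a"
proof -
  define admissible where "admissible p \<longleftrightarrow> 4 \<le> p \<and> m \<le> p * (n - 1 - p) + 2" for p
  define p where "p = (LEAST p. admissible p)"
  have "admissible ((n - 1) div 2)"
    unfolding admissible_def using assms(1,3) by auto
  then have "admissible p" "p \<le> (n - 1) div 2"
    unfolding p_def by (auto intro: LeastI Least_le)
  then have p: "4 \<le> p" "m \<le> p * (n - 1 - p) + 2" "p + 1 < n"
    unfolding admissible_def using assms(1) by auto
  define q where "q = n - 1 - p"
  have n: "n = p + q + 1" unfolding q_def using p(3) by simp
  (* For p > 4, minimality of p means m exceeds (p - 1) * (q + 1) + 2, the largest count for p - 1. *)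
  have "(p - 1) * q + 4 \<le> m"
  proof (cases "p = 4")
    case True
    then show ?thesis using assms(2) n by simp
  next
    case False
    have "p - 1 < p" using p(1) by simp
    then have "\<not> admissible (p - 1)"
      unfolding p_def by (rule not_less_Least)
    then have "(p - 1) * (q + 1) + 2 < m"
      unfolding admissible_def using False p(1) n by auto
    moreover have "(p - 1) * (q + 1) = (p - 1) * q + (p - 1)" by simp
    ultimately show ?thesis using p(1) by linarith
  qed
  moreover have "(p - 1) * q + q = p * q"
    using p(1) by (cases p) simp_all
  ultimately have "2 \<le> p * q + 4 - m" "p + (p * q + 4 - m) < n"
    "m = p * q + 4 - (p * q + 4 - m)"
    using p(2) n unfolding q_def[symmetric] by linarith+
  then show ?thesis
    using p(1) unfolding q_def by blast
qed

theorem theorem1p2: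
  fixes n m :: nat
  assumes "n \<ge> 10"
    and "3 * n - 11 \<le> m"
    and "m \<le> ((n - 1) div 2) * ((n - 1) - (n - 1) div 2) + 2"
  shows "\<exists>E :: nat set set. simple_graph {0..<n} E \<and> card E = m \<and>
           K4_minus_saturated {0..<n} E \<and> \<not> bipartite {0..<n} E"
proof -
  obtain p a where "4 \<le> p" "2 \<le> a" "p + a < n" "m = p * (n - 1 - p) + 4 - a"
    using edge_count_parameters[OF assms] by blast
  then show ?thesis
    using simple_graph_block_graph card_block_graph K4_minus_saturated_block_graph
      not_bipartite_block_graph[of p n a]
    by (intro exI[of _ "block_graph n p a"]) auto
qed

end
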